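(* Let $\Omega$ be a metric space and $\tau$ a two-valued measurable cardinal with $|\Omega|\ge\tau$. Then there exist $r>0$ and a subset $Y\subseteq\Omega$ of cardinality $\tau$ such that the metric of $\Omega$ restricted to $Y$ takes only the values $0$ and $r$ (i.e. $d(x,y)=r$ for all distinct $x,y\in Y$).
   Context: A cardinal $\tau$ is two-valued measurable (measurable) if there is a probability measure defined on all subsets of $\tau$, taking only the values $0$ and $1$, vanishing on singletons, whose ideal of null sets is closed under unions of fewer than $\tau$ members. *)

theory Defs
  imports "HOL-Analysis.Analysis" "HOL-Probability.Probability"
begin

text \<open>A cardinal tau is represented by a set T with cardinality tau (card_of T).
  tau is two-valued measurable iff there is a probability measure defined on all
  subsets of T, taking only the values 0 and 1, vanishing on singletons, whose
  ideal of null sets is closed under unions of fewer than tau members.\<close>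

definition two_valued_measurable :: "'b set \<Rightarrow> bool" where
  "two_valued_measurable T \<longleftrightarrow>
     (\<exists>M. space M = T \<and> sets M = Pow T \<and> prob_space M \<and>
        (\<forall>A\<subseteq>T. emeasure M A = 0 \<or> emeasure M A = 1) \<and>
        (\<forall>x\<in>T. emeasure M {x} = 0) \<and>
        (\<forall>F. F \<subseteq> {A. A \<subseteq> T \<and> emeasure M A = 0} \<and>
              (card_of F, card_of T) \<in> ordLess
              \<longrightarrow> emeasure M (\<Union>F) = 0))"

end

theory Submission
  imports Defs
begin

text \<open>
  Pull the metric back to \<open>T\<close>, \<open>|T| = \<tau>\<close>, along an injection \<open>f\<close>. A two-valued
  countably additive measure makes every real function almost everywhere constant (one side
  of each rational cut is null), so for every \<open>x\<close> the distance \<open>d (f x) (f y)\<close> is almost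
  surely some \<open>h x\<close>, and \<open>h\<close> is almost surely some \<open>r\<close>. A maximal subset \<open>Y\<close> of
  \<open>{h = r}\<close> on which all distances are \<open>r\<close> has size \<open>\<tau>\<close>: otherwise, by
  \<open>\<tau>\<close>-completeness, the points violating \<open>d (f y) (f z) = r\<close> for some \<open>y \<in> Y\<close> form a
  null set together with \<open>{h \<noteq> r}\<close>, and any point outside it extends \<open>Y\<close>. Since \<open>\<tau>\<close>
  is infinite, \<open>Y\<close> has two points, so \<open>r > 0\<close>.
\<close>

definition homogeneous :: "('a \<Rightarrow> 'a \<Rightarrow> 'b) \<Rightarrow> 'b \<Rightarrow> 'a set \<Rightarrow> bool" where
  "homogeneous c r Y \<longleftrightarrow> (\<forall>x\<in>Y. \<forall>y\<in>Y. x \<noteq> y \<longrightarrow> c x y = r)"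

lemma homogeneous_image:
  "homogeneous (\<lambda>x y. c (f x) (f y)) r Y \<Longrightarrow> homogeneous c r (f ` Y)"
  by (auto simp: homogeneous_def)

lemma (in Metric_space) homogeneous_infinite_imp_pos:
  assumes "Y \<subseteq> M" "infinite Y" "homogeneous d r Y"
  shows "r > 0"
proof -
  obtain x y where "x \<in> Y" "y \<in> Y - {x}"
    using assms(2) by (metis infinite_imp_nonempty infinite_remove ex_in_conv)
  with assms have "d x y = r" "x \<noteq> y" "x \<in> M" "y \<in> M"
    by (auto simp: homogeneous_def)
  then show ?thesis
    by (metis nonneg zero order_less_le)
qed

lemma card_of_image_ordIso: "inj_on f A \<Longrightarrow> (card_of (f ` A), card_of A) \<in> ordIso"
  by (metis bij_betw_imageI card_of_ordIso ordIso_symmetric)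

lemma ex_maximal_homogeneous_subset:
  obtains Y where "Y \<subseteq> A" "homogeneous c r Y"
    "\<And>z. z \<in> A - Y \<Longrightarrow> \<not> homogeneous c r (insert z Y)"
proof -
  define H where "H = {Y. Y \<subseteq> A \<and> homogeneous c r Y}"
  have "\<Union>C \<in> H" if C: "C \<in> chains H" for C
  proof -
    have "homogeneous c r (\<Union>C)"
      unfolding homogeneous_def
    proof (intro ballI impI)
      fix x y assume "x \<in> \<Union>C" "y \<in> \<Union>C" "x \<noteq> y"
      then obtain X X' where "X \<in> C" "X' \<in> C" "x \<in> X" "y \<in> X'" by blast
      have "X \<union> X' \<in> C"
        using chainsD[OF C \<open>X \<in> C\<close> \<open>X' \<in> C\<close>] \<open>X \<in> C\<close> \<open>X' \<in> C\<close>
        by (auto simp: Un_absorb1 Un_absorb2)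
      with chainsD2[OF C] have "homogeneous c r (X \<union> X')"
        by (auto simp: H_def)
      with \<open>x \<in> X\<close> \<open>y \<in> X'\<close> \<open>x \<noteq> y\<close> show "c x y = r"
        by (simp add: homogeneous_def)
    qed
    moreover have "\<Union>C \<subseteq> A"
      using chainsD2[OF C] by (auto simp: H_def)
    ultimately show ?thesis by (simp add: H_def)
  qed
  then obtain Y where Y: "Y \<in> H" and max: "\<forall>X\<in>H. Y \<subseteq> X \<longrightarrow> X = Y"
    using Zorn_Lemma[of H] by blast
  show thesis
  proof (rule that)
    fix z assume z: "z \<in> A - Y"
    show "\<not> homogeneous c r (insert z Y)"
    proof
      assume "homogeneous c r (insert z Y)"
      with Y z have "insert z Y \<in> H" by (simp add: H_def)
      with max have "insert z Y = Y" by blast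
      with z show False by blast
    qed
  qed (use Y in \<open>auto simp: H_def\<close>)
qed

locale zero_one_prob_space = prob_space +
  assumes prob_zero_one: "A \<in> events \<Longrightarrow> prob A = 0 \<or> prob A = 1"
begin

lemma AE_or_AE_not:
  assumes "{x \<in> space M. P x} \<in> events"
  shows "(AE x in M. P x) \<or> (AE x in M. \<not> P x)"
  using prob_zero_one[OF assms] prob_Collect_eq_0[OF assms] prob_Collect_eq_1[OF assms]
  by auto

lemma AE_eq_const:
  fixes g :: "'a \<Rightarrow> real"
  assumes g: "g \<in> borel_measurable M"
  shows "\<exists>r. AE x in M. g x = r"
proof -
  define below :: "rat \<Rightarrow> bool" where "below q \<longleftrightarrow> (AE x in M. g x < of_rat q)" for q
  have "AE x in M. (g x < of_rat q) = below q" for q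
  proof -
    have "{x \<in> space M. g x < of_rat q} \<in> events"
      using g by measurable
    from AE_or_AE_not[OF this] show ?thesis
    proof
      assume less: "AE x in M. g x < of_rat q"
      then have "below q" by (simp add: below_def)
      with less show ?thesis by (auto elim: eventually_mono)
    next
      assume not_less: "AE x in M. \<not> g x < of_rat q"
      have "\<not> below q"
      proof
        assume "below q"
        with not_less have "AE x in M. False"
          unfolding below_def by eventually_elim auto
        then show False by simp
      qed
      with not_less show ?thesis by (auto elim: eventually_mono)
    qed
  qed
  then have good: "AE x in M. \<forall>q. (g x < of_rat q) = below q"
    by (simp add: AE_all_countable)
  then obtain x0 where x0: "\<forall>q. (g x0 < of_rat q) = below q"
    using eventually_happens'[OF ae_filter_bot] by blast
  have "g x = g x0" if "\<forall>q. (g x < of_rat q) = below q" for x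
  proof (rule ccontr)
    assume "g x \<noteq> g x0"
    then consider "g x < g x0" | "g x0 < g x" by linarith
    then show False
      by cases (metis of_rat_dense x0 that order.asym)+
  qed
  with good have "AE x in M. g x = g x0"
    by (auto elim: eventually_mono)
  then show ?thesis ..
qed

end

locale two_valued_measure = prob_space +
  assumes sets_eq_Pow: "sets M = Pow (space M)"
    and emeasure_zero_one: "A \<subseteq> space M \<Longrightarrow> emeasure M A = 0 \<or> emeasure M A = 1"
    and emeasure_singleton: "x \<in> space M \<Longrightarrow> emeasure M {x} = 0"
    and Union_null_sets:
      "F \<subseteq> null_sets M \<Longrightarrow> (card_of F, card_of (space M)) \<in> ordLess \<Longrightarrow> \<Union>F \<in> null_sets M"

lemma two_valued_measurableE:
  assumes "two_valued_measurable T"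
  obtains M where "space M = T" "two_valued_measure M"
proof -
  obtain M where M: "space M = T" "sets M = Pow T" "prob_space M"
    "\<forall>A\<subseteq>T. emeasure M A = 0 \<or> emeasure M A = 1" "\<forall>x\<in>T. emeasure M {x} = 0"
    "\<forall>F. F \<subseteq> {A. A \<subseteq> T \<and> emeasure M A = 0} \<and> (card_of F, card_of T) \<in> ordLess
       \<longrightarrow> emeasure M (\<Union>F) = 0"
    using assms unfolding two_valued_measurable_def by blast
  have "two_valued_measure_axioms M"
  proof
    show "sets M = Pow (space M)"
      using M(1,2) by simp
    show "emeasure M A = 0 \<or> emeasure M A = 1" if "A \<subseteq> space M" for A
      using M(1,4) that by simp
    show "emeasure M {x} = 0" if "x \<in> space M" for x
      using M(1,5) that by simp
  next
    fix F assume F: "F \<subseteq> null_sets M" "(card_of F, card_of (space M)) \<in> ordLess"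
    have "F \<subseteq> {A. A \<subseteq> T \<and> emeasure M A = 0}"
      using F(1) M(1,2) by (auto simp: null_sets_def)
    with F(2) have "emeasure M (\<Union>F) = 0"
      unfolding M(1) by (intro M(6)[rule_format] conjI)
    moreover have "\<Union>F \<in> sets M"
      using F(1) M(2) by (auto simp: null_sets_def)
    ultimately show "\<Union>F \<in> null_sets M" by (rule null_setsI)
  qed
  with M(3) have "two_valued_measure M"
    by (simp add: two_valued_measure_def)
  with M(1) show thesis by (rule that)
qed

context two_valued_measure
begin

sublocale zero_one_prob_space
proof
  fix A assume "A \<in> events"
  then show "prob A = 0 \<or> prob A = 1"
    using emeasure_zero_one[OF sets.sets_into_space] by (simp add: emeasure_eq_measure)
qed

lemma measurable_Pow: "g \<in> borel_measurable M"
  by (auto simp: measurable_def sets_eq_Pow)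

lemma AE_iff_null_Pow: "(AE x in M. P x) \<longleftrightarrow> {x \<in> space M. \<not> P x} \<in> null_sets M"
  by (rule AE_iff_null) (auto simp: sets_eq_Pow)

lemma null_sets_singleton: "x \<in> space M \<Longrightarrow> {x} \<in> null_sets M"
  by (auto simp: emeasure_singleton sets_eq_Pow)

lemma UN_null_sets_small:
  assumes "(card_of I, card_of (space M)) \<in> ordLess" and "\<And>i. i \<in> I \<Longrightarrow> N i \<in> null_sets M"
  shows "(\<Union>i\<in>I. N i) \<in> null_sets M"
proof (rule Union_null_sets)
  show "(card_of (N ` I), card_of (space M)) \<in> ordLess"
    using card_of_image assms(1) ordLeq_ordLess_trans by blast
qed (use assms(2) in auto)

lemma infinite_space: "infinite (space M)"
proof
  assume "finite (space M)"
  then have "(\<Union>x\<in>space M. {x}) \<in> null_sets M"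
    by (intro null_sets_UN') (auto simp: countable_finite null_sets_singleton)
  then show False
    using emeasure_space_1 by auto
qed

lemma ex_not_in_null_set:
  assumes "N \<in> null_sets M"
  shows "\<exists>x\<in>space M. x \<notin> N"
proof (rule ccontr)
  assume "\<not> ?thesis"
  then have "N = space M"
    using assms sets.sets_into_space by blast
  with assms show False
    using emeasure_space_1 by auto
qed

lemma ex_large_homogeneous_subset:
  fixes c :: "'a \<Rightarrow> 'a \<Rightarrow> real"
  assumes sym: "\<And>x y. x \<in> space M \<Longrightarrow> y \<in> space M \<Longrightarrow> c x y = c y x"
  shows "\<exists>r. \<exists>Y\<subseteq>space M. (card_of Y, card_of (space M)) \<in> ordIso \<and> homogeneous c r Y"
proof -
  have "\<exists>v. AE y in M. c x y = v" for x
    by (rule AE_eq_const[OF measurable_Pow])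
  then obtain h where h: "\<And>x. AE y in M. c x y = h x" by metis
  obtain r where r: "AE x in M. h x = r"
    using AE_eq_const[OF measurable_Pow] by blast
  define A where "A = {x \<in> space M. h x = r}"
  obtain Y where "Y \<subseteq> A" and hom: "homogeneous c r Y"
    and max: "\<And>z. z \<in> A - Y \<Longrightarrow> \<not> homogeneous c r (insert z Y)"
    using ex_maximal_homogeneous_subset[where A = A and c = c and r = r] by blast
  then have Y: "Y \<subseteq> space M" by (auto simp: A_def)
  have "(card_of Y, card_of (space M)) \<notin> ordLess"
  proof
    assume small: "(card_of Y, card_of (space M)) \<in> ordLess"
    define N where "N y = {z \<in> space M. c y z \<noteq> r} \<union> {y}" for y
    have "space M - A = {x \<in> space M. h x \<noteq> r}"
      by (auto simp: A_def)
    with r have "space M - A \<in> null_sets M"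
      by (simp add: AE_iff_null_Pow)
    moreover have "(\<Union>y\<in>Y. N y) \<in> null_sets M"
    proof (rule UN_null_sets_small[OF small])
      fix y assume "y \<in> Y"
      with \<open>Y \<subseteq> A\<close> have "y \<in> space M" "h y = r" by (auto simp: A_def)
      with h[of y] have "{z \<in> space M. c y z \<noteq> r} \<in> null_sets M"
        by (simp add: AE_iff_null_Pow)
      with \<open>y \<in> space M\<close> show "N y \<in> null_sets M"
        unfolding N_def by (intro null_sets.Un null_sets_singleton)
    qed
    ultimately have "(space M - A) \<union> (\<Union>y\<in>Y. N y) \<in> null_sets M"
      by (rule null_sets.Un)
    then obtain z where z: "z \<in> space M" "z \<notin> (space M - A) \<union> (\<Union>y\<in>Y. N y)"
      using ex_not_in_null_set by blast
    then have "z \<in> A - Y" by (auto simp: N_def)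
    have "c y z = r \<and> c z y = r" if "y \<in> Y" for y
      using z that Y sym[of y z] by (auto simp: N_def)
    with hom have "homogeneous c r (insert z Y)"
      unfolding homogeneous_def by auto
    with max \<open>z \<in> A - Y\<close> show False by blast
  qed
  moreover have "(card_of Y, card_of (space M)) \<in> ordLeq"
    using Y by (rule card_of_mono1)
  ultimately have "(card_of Y, card_of (space M)) \<in> ordIso"
    using ordLess_or_ordLeq[OF card_of_Well_order card_of_Well_order, of Y "space M"]
    by (simp add: ordIso_iff_ordLeq)
  with Y hom show ?thesis by blast
qed

end

theorem mainTheorem8:
  fixes \<Omega> :: "'a set" and d :: "'a \<Rightarrow> 'a \<Rightarrow> real" and T :: "'b set"
  assumes "Metric_space \<Omega> d"
    and "two_valued_measurable T"
    and "(card_of T, card_of \<Omega>) \<in> ordLeq"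
  shows "\<exists>r>0. \<exists>Y\<subseteq>\<Omega>. (card_of Y, card_of T) \<in> ordIso \<and>
           (\<forall>x\<in>Y. \<forall>y\<in>Y. x \<noteq> y \<longrightarrow> d x y = r)"
proof -
  interpret \<Omega>: Metric_space \<Omega> d by fact
  obtain M where T: "space M = T" and "two_valued_measure M"
    using assms(2) by (rule two_valued_measurableE)
  interpret two_valued_measure M by fact
  obtain f where f: "inj_on f T" "f ` T \<subseteq> \<Omega>"
    using assms(3) card_of_ordLeq[of T \<Omega>] by auto
  have "\<exists>r. \<exists>Y\<subseteq>T. (card_of Y, card_of T) \<in> ordIso \<and> homogeneous (\<lambda>x y. d (f x) (f y)) r Y"
    using ex_large_homogeneous_subset[of "\<lambda>x y. d (f x) (f y)"] \<Omega>.commute unfolding T by simp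
  then obtain r Y where Y: "Y \<subseteq> T" "(card_of Y, card_of T) \<in> ordIso"
    and hom_Y: "homogeneous (\<lambda>x y. d (f x) (f y)) r Y"
    by blast
  have hom: "homogeneous d r (f ` Y)"
    using hom_Y by (rule homogeneous_image)
  have iso: "(card_of (f ` Y), card_of T) \<in> ordIso"
    using card_of_image_ordIso[OF inj_on_subset[OF f(1) Y(1)]] Y(2) by (rule ordIso_transitive)
  have "f ` Y \<subseteq> \<Omega>"
    using f(2) Y(1) by blast
  moreover have "infinite (f ` Y)"
    using card_of_ordIso_finite[OF iso] infinite_space T by simp
  ultimately have "r > 0"
    using hom by (rule \<Omega>.homogeneous_infinite_imp_pos)
  with \<open>f ` Y \<subseteq> \<Omega>\<close> iso hom show ?thesis
    unfolding homogeneous_def by blast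
qed

end
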